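(* Let $R$ be a finite commutative Frobenius ring of characteristic $2$, let $G=\{g_1,\dots,g_n\}$ be a finite abelian group of order $n$ with a fixed listing of its elements, let $v_1\neq v_2$ be elements of $RG$, and let $A$ be an $n\times n$ reverse circulant matrix over $R$. Let $C_\sigma$ be the code over $R$ generated by $$M(\sigma)=\left(\, I_{2n} \;\middle|\; \begin{matrix} \sigma(v_1) & \sigma(v_2)+A\\ \sigma(v_2)+A & \sigma(v_1)\end{matrix}\,\right).$$ If $C_\sigma$ is self-dual and $A=0$, then $v_1+v_2$ is a unitary unit of $RG$, i.e. $(v_1+v_2)(v_1+v_2)^*=1$.
   Context: For $v=\sum_{g\in G}\alpha_g g\in RG$, $\sigma(v)$ is the $n\times n$ matrix over $R$ whose $(i,j)$ entry is $\alpha_{g_i^{-1}g_j}$, and $v^*=\sum_g\alpha_g g^{-1}$. An $n\times n$ matrix $(a_{ij})$ is reverse circulant if $a_{ij}$ depends only on $(i+j)\bmod n$. The code generated by a matrix is the $R$-submodule spanned by its rows; it is self-dual if it equals its dual with respect to the Euclidean inner product $\langle x,y\rangle=\sum_i x_iy_i$. *)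

theory Defs
  imports Complex_Main
begin

definition is_ideal :: "'r::comm_ring_1 set \<Rightarrow> bool" where
  "is_ideal I \<longleftrightarrow> 0 \<in> I \<and> (\<forall>a\<in>I. \<forall>b\<in>I. a + b \<in> I) \<and> (\<forall>a\<in>I. -a \<in> I)
     \<and> (\<forall>r. \<forall>a\<in>I. r * a \<in> I)"

definition additive_character :: "('r::comm_ring_1 \<Rightarrow> complex) \<Rightarrow> bool" where
  "additive_character \<chi> \<longleftrightarrow> (\<forall>a. \<chi> a \<noteq> 0) \<and> (\<forall>a b. \<chi> (a + b) = \<chi> a * \<chi> b)"

(* A finite commutative ring is Frobenius iff it admits a generating character:
   a character whose kernel contains no nonzero ideal. *)
definition frobenius_ring :: "'r::{comm_ring_1,finite} itself \<Rightarrow> bool" where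
  "frobenius_ring _ \<longleftrightarrow> (\<exists>\<chi> :: 'r \<Rightarrow> complex. additive_character \<chi> \<and>
      (\<forall>I. is_ideal I \<and> (\<forall>a\<in>I. \<chi> a = 1) \<longrightarrow> I = {0}))"

(* Group ring RG over a finite abelian group G (written additively):
   elements are functions G \<Rightarrow> R, v = \<Sum>_g v(g) g. *)
definition gr_mult :: "('g::{ab_group_add,finite} \<Rightarrow> 'r::comm_ring_1) \<Rightarrow> ('g \<Rightarrow> 'r) \<Rightarrow> ('g \<Rightarrow> 'r)" where
  "gr_mult v w = (\<lambda>h. \<Sum>k\<in>UNIV. v k * w (h - k))"

definition gr_one :: "'g::{ab_group_add,finite} \<Rightarrow> 'r::comm_ring_1" where
  "gr_one = (\<lambda>h. if h = 0 then 1 else 0)"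

definition gr_add :: "('g \<Rightarrow> 'r::comm_ring_1) \<Rightarrow> ('g \<Rightarrow> 'r) \<Rightarrow> ('g \<Rightarrow> 'r)" where
  "gr_add v w = (\<lambda>h. v h + w h)"

definition gr_star :: "('g::ab_group_add \<Rightarrow> 'r) \<Rightarrow> ('g \<Rightarrow> 'r)" where
  "gr_star v = (\<lambda>h. v (- h))"

(* \<sigma>(v)_{ij} = v(g_i^{-1} g_j), for the listing g : {0..<n} \<rightarrow> G; matrices are nat \<Rightarrow> nat \<Rightarrow> 'r, 0-indexed *)
definition sigma_mat :: "(nat \<Rightarrow> 'g::ab_group_add) \<Rightarrow> ('g \<Rightarrow> 'r) \<Rightarrow> nat \<Rightarrow> nat \<Rightarrow> 'r" where
  "sigma_mat g v = (\<lambda>i j. v (- g i + g j))"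

definition reverse_circulant :: "nat \<Rightarrow> (nat \<Rightarrow> nat \<Rightarrow> 'r) \<Rightarrow> bool" where
  "reverse_circulant n A \<longleftrightarrow> (\<forall>i<n. \<forall>j<n. \<forall>k<n. \<forall>l<n. (i + j) mod n = (k + l) mod n \<longrightarrow> A i j = A k l)"

(* The 2n \<times> 4n generator matrix ( I_{2n} | [[B1, B2],[B2, B1]] ) with B1 = \<sigma>(v1), B2 = \<sigma>(v2)+A *)
definition M_sigma :: "nat \<Rightarrow> (nat \<Rightarrow> 'g::ab_group_add) \<Rightarrow> ('g \<Rightarrow> 'r::comm_ring_1) \<Rightarrow> ('g \<Rightarrow> 'r)
    \<Rightarrow> (nat \<Rightarrow> nat \<Rightarrow> 'r) \<Rightarrow> nat \<Rightarrow> nat \<Rightarrow> 'r" where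
  "M_sigma n g v1 v2 A = (\<lambda>i k.
     let B1 = sigma_mat g v1; B2 = (\<lambda>a b. sigma_mat g v2 a b + A a b) in
     if k < 2 * n then (if i = k then 1 else 0)
     else let l = k - 2 * n in
       if i < n then (if l < n then B1 i l else B2 i (l - n))
       else (if l < n then B2 (i - n) l else B1 (i - n) (l - n)))"

(* Vectors of length N are functions nat \<Rightarrow> 'r vanishing at indices \<ge> N.
   The code generated by an m \<times> N matrix is the R-span of its rows. *)
definition code_gen :: "nat \<Rightarrow> nat \<Rightarrow> (nat \<Rightarrow> nat \<Rightarrow> 'r::comm_ring_1) \<Rightarrow> (nat \<Rightarrow> 'r) set" where
  "code_gen m N M = {x. \<exists>c. \<forall>k. x k = (if k < N then (\<Sum>i<m. c i * M i k) else 0)}"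

definition dual_code :: "nat \<Rightarrow> (nat \<Rightarrow> 'r::comm_ring_1) set \<Rightarrow> (nat \<Rightarrow> 'r) set" where
  "dual_code N C = {y. (\<forall>k\<ge>N. y k = 0) \<and> (\<forall>x\<in>C. (\<Sum>k<N. x k * y k) = 0)}"

definition self_dual :: "nat \<Rightarrow> (nat \<Rightarrow> 'r::comm_ring_1) set \<Rightarrow> bool" where
  "self_dual N C \<longleftrightarrow> C = dual_code N C"

end

theory Submission
  imports Defs
begin

text \<open>Every row of the generator matrix lies in the self-dual code, so any two rows are
  orthogonal. Writing \<open>\<sigma>(a) \<sigma>(b)\<^sup>T = \<sigma>(a b\<^sup>*)\<close>, orthogonality of two rows of the upper half
  says \<open>I + \<sigma>(v\<^sub>1 v\<^sub>1\<^sup>*) + \<sigma>(v\<^sub>2 v\<^sub>2\<^sup>*) = 0\<close>, and orthogonality of a row of the upper half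
  with one of the lower half says \<open>\<sigma>(v\<^sub>1 v\<^sub>2\<^sup>*) + \<sigma>(v\<^sub>2 v\<^sub>1\<^sup>*) = 0\<close>. Adding both and using
  \<open>-1 = 1\<close> gives \<open>\<sigma>((v\<^sub>1 + v\<^sub>2)(v\<^sub>1 + v\<^sub>2)\<^sup>*) = I\<close>, and \<open>\<sigma>\<close> is injective.\<close>

lemma sum_lessThan_add:
  "(\<Sum>k<a + (b::nat). f k) = (\<Sum>k<a. f k) + (\<Sum>l<b. (f (a + l) :: 'a::comm_monoid_add))"
  by (induction b arbitrary: f) (simp_all add: add.assoc)

lemma gr_star_add: "gr_star (gr_add v w) = gr_add (gr_star v) (gr_star w)"
  by (simp add: gr_star_def gr_add_def)

lemma gr_mult_add_left: "gr_mult (gr_add u v) w = gr_add (gr_mult u w) (gr_mult v w)"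
  by (simp add: gr_mult_def gr_add_def distrib_right sum.distrib)

lemma gr_mult_add_right: "gr_mult u (gr_add v w) = gr_add (gr_mult u v) (gr_mult u w)"
  by (simp add: gr_mult_def gr_add_def distrib_left sum.distrib)

lemma sigma_mat_add: "sigma_mat g (gr_add v w) i j = sigma_mat g v i j + sigma_mat g w i j"
  by (simp add: sigma_mat_def gr_add_def)

lemma sigma_mat_mult_transpose:
  fixes g :: "nat \<Rightarrow> 'g::{ab_group_add,finite}" and a b :: "'g \<Rightarrow> 'r::comm_ring_1"
  assumes "bij_betw g {0..<n} UNIV"
  shows "(\<Sum>l<n. sigma_mat g a i l * sigma_mat g b j l) = sigma_mat g (gr_mult a (gr_star b)) i j"
proof -
  have "(\<Sum>l<n. sigma_mat g a i l * sigma_mat g b j l) = (\<Sum>x\<in>UNIV. a (- g i + x) * b (- g j + x))"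
    using sum.reindex_bij_betw[OF assms, of "\<lambda>x. a (- g i + x) * b (- g j + x)"]
    by (simp add: sigma_mat_def atLeast0LessThan)
  also have "\<dots> = (\<Sum>k\<in>UNIV. a k * b (- (- g i + g j - k)))"
    by (rule sum.reindex_bij_witness[of _ "\<lambda>k. g i + k" "\<lambda>x. - g i + x"])
      (auto simp: algebra_simps)
  also have "\<dots> = sigma_mat g (gr_mult a (gr_star b)) i j"
    by (simp add: sigma_mat_def gr_mult_def gr_star_def)
  finally show ?thesis .
qed

lemma eq_gr_one_if_sigma_mat_identity:
  fixes g :: "nat \<Rightarrow> 'g::{ab_group_add,finite}" and u :: "'g \<Rightarrow> 'r::comm_ring_1"
  assumes listing: "bij_betw g {0..<n} UNIV"
    and identity: "\<forall>i<n. \<forall>j<n. sigma_mat g u i j = (if i = j then 1 else 0)"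
  shows "u = gr_one"
proof
  fix h
  have "0 \<in> g ` {0..<n}" "h \<in> g ` {0..<n}"
    using listing by (auto simp: bij_betw_def)
  then obtain i j where ij: "i < n" "g i = 0" "j < n" "g j = h"
    by auto
  then have "i = j \<longleftrightarrow> h = 0"
    using listing by (auto simp: bij_betw_def inj_on_def)
  have "u h = sigma_mat g u i j"
    using ij by (simp add: sigma_mat_def)
  also have "\<dots> = gr_one h"
    using identity ij \<open>i = j \<longleftrightarrow> h = 0\<close> by (simp add: gr_one_def)
  finally show "u h = gr_one h" .
qed

lemma code_gen_row:
  assumes "r < m"
  shows "(\<lambda>k. if k < N then M r k else 0) \<in> code_gen m N M"
proof -
  have "{..<m} \<inter> {i. i = r} = {r}"
    using assms by auto
  then have "(\<Sum>i<m. of_bool (i = r) * M i k) = M r k" for k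
    by simp
  then show ?thesis
    unfolding code_gen_def by (intro CollectI exI[of _ "\<lambda>i. of_bool (i = r)"]) simp
qed

lemma self_dual_rows_orthogonal:
  assumes "self_dual N (code_gen m N M)" "i < m" "j < m"
  shows "(\<Sum>k<N. M i k * M j k) = 0"
proof -
  have "(\<lambda>k. if k < N then M j k else 0) \<in> dual_code N (code_gen m N M)"
    using assms(1) code_gen_row[OF assms(3)] unfolding self_dual_def by simp
  then show ?thesis
    using code_gen_row[OF assms(2)] unfolding dual_code_def by force
qed

lemma M_sigma_left_block:
  "k < 2 * n \<Longrightarrow> M_sigma n g v1 v2 A i k = (if i = k then 1 else 0)"
  by (simp add: M_sigma_def)

lemma M_sigma_right_blocks:
  assumes "i < n" "l < n"
  shows "M_sigma n g v1 v2 A i (2 * n + l) = sigma_mat g v1 i l"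
    and "M_sigma n g v1 v2 A i (3 * n + l) = sigma_mat g v2 i l + A i l"
    and "M_sigma n g v1 v2 A (n + i) (2 * n + l) = sigma_mat g v2 i l + A i l"
    and "M_sigma n g v1 v2 A (n + i) (3 * n + l) = sigma_mat g v1 i l"
  using assms by (simp_all add: M_sigma_def Let_def)

lemma sum_lessThan_4n:
  fixes n :: nat
  shows "(\<Sum>k<4 * n. f k) =
     (\<Sum>k<2 * n. f k) + (\<Sum>l<n. f (2 * n + l)) + (\<Sum>l<n. (f (3 * n + l) :: 'a::comm_monoid_add))"
proof -
  have "4 * n = 2 * n + (n + n)"
    by simp
  then show ?thesis
    by (simp only: sum_lessThan_add) (simp add: add.assoc numeral_3_eq_3)
qed

lemma M_sigma_rows_upper_inner:
  assumes "i < n" "j < n"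
  shows "(\<Sum>k<4 * n. M_sigma n g v1 v2 A i k * M_sigma n g v1 v2 A j k) =
    (if i = j then 1 else 0) + (\<Sum>l<n. sigma_mat g v1 i l * sigma_mat g v1 j l)
      + (\<Sum>l<n. (sigma_mat g v2 i l + A i l) * (sigma_mat g v2 j l + A j l))"
proof -
  have "(\<Sum>k<2 * n. M_sigma n g v1 v2 A i k * M_sigma n g v1 v2 A j k) =
      (\<Sum>k<2 * n. of_bool (k = i) * (if i = j then 1 else 0))"
    by (rule sum.cong) (auto simp: M_sigma_left_block)
  also have "\<dots> = (if i = j then 1 else 0)"
    using assms by (simp add: Int_absorb1 lessThan_def)
  finally show ?thesis
    using assms by (simp add: sum_lessThan_4n M_sigma_right_blocks)
qed

lemma M_sigma_rows_upper_lower_inner: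
  assumes "i < n" "j < n"
  shows "(\<Sum>k<4 * n. M_sigma n g v1 v2 A i k * M_sigma n g v1 v2 A (n + j) k) =
    (\<Sum>l<n. sigma_mat g v1 i l * (sigma_mat g v2 j l + A j l))
      + (\<Sum>l<n. (sigma_mat g v2 i l + A i l) * sigma_mat g v1 j l)"
proof -
  have "(\<Sum>k<2 * n. M_sigma n g v1 v2 A i k * M_sigma n g v1 v2 A (n + j) k) = 0"
    using assms by (intro sum.neutral) (auto simp: M_sigma_left_block)
  then show ?thesis
    using assms by (simp add: sum_lessThan_4n M_sigma_right_blocks)
qed

theorem mainTheorem8:
  fixes g :: "nat \<Rightarrow> 'g::{ab_group_add,finite}"
    and v1 v2 :: "'g \<Rightarrow> 'r::{comm_ring_1,finite}"
    and A :: "nat \<Rightarrow> nat \<Rightarrow> 'r"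
    and n :: nat
  assumes frob: "frobenius_ring TYPE('r)"
    and char2: "CHAR('r) = 2"
    and n_def: "n = card (UNIV :: 'g set)"
    and listing: "bij_betw g {0..<n} (UNIV :: 'g set)"
    and neq: "v1 \<noteq> v2"
    and revcirc: "reverse_circulant n A"
    and selfdual: "self_dual (4 * n) (code_gen (2 * n) (4 * n) (M_sigma n g v1 v2 A))"
    and A0: "\<forall>i<n. \<forall>j<n. A i j = 0"
  shows "gr_mult (gr_add v1 v2) (gr_star (gr_add v1 v2)) = gr_one"
proof (rule eq_gr_one_if_sigma_mat_identity[OF listing], intro allI impI)
  fix i j
  assume ij: "i < n" "j < n"
  let ?M = "M_sigma n g v1 v2 A"
  let ?\<sigma> = "\<lambda>a b. sigma_mat g (gr_mult a (gr_star b)) i j"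
  have "(\<Sum>k<4 * n. ?M i k * ?M j k) = 0"
    using ij by (intro self_dual_rows_orthogonal[OF selfdual]) auto
  then have upper: "(if i = j then 1 else 0) + ?\<sigma> v1 v1 + ?\<sigma> v2 v2 = 0"
    by (simp add: M_sigma_rows_upper_inner ij A0 sigma_mat_mult_transpose[OF listing])
  have "(\<Sum>k<4 * n. ?M i k * ?M (n + j) k) = 0"
    using ij by (intro self_dual_rows_orthogonal[OF selfdual]) auto
  then have mixed: "?\<sigma> v1 v2 + ?\<sigma> v2 v1 = 0"
    by (simp add: M_sigma_rows_upper_lower_inner ij A0 sigma_mat_mult_transpose[OF listing])
  have "?\<sigma> (gr_add v1 v2) (gr_add v1 v2) =
      ((if i = j then 1 else 0) + ?\<sigma> v1 v1 + ?\<sigma> v2 v2) + (?\<sigma> v1 v2 + ?\<sigma> v2 v1)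
        - (if i = j then 1 else 0)"
    by (simp add: gr_star_add gr_mult_add_left gr_mult_add_right sigma_mat_add)
  also have "\<dots> = - (if i = j then 1 else 0)"
    by (simp only: upper mixed) simp
  also have "\<dots> = (if i = j then 1 else 0)"
    by (rule uminus_CHAR_2[OF char2])
  finally show "?\<sigma> (gr_add v1 v2) (gr_add v1 v2) = (if i = j then 1 else 0)" .
qed

end
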